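(* Suppose the splitting condition $\sum_{j=1}^mP_jv=v$ for all $v\in H_0$ holds. Then for every $x\in H$ with $\langle x,R_0x\rangle>0$ and every $n\ge0$, $\mathbb E_{\nu_x}[M_n]\le(1-1/m)^n\langle x,R_0x\rangle$, and $\langle x,R_\infty(\omega)x\rangle=0$ for $\nu_x$-almost every $\omega$.
   Context: Let $H$ be a complex Hilbert space, $m\ge2$, $P_1,\dots,P_m$ orthogonal projections on $H$, $R_0\in B(H)_+$, and $H_0=\overline{\mathrm{ran}}(R_0^{1/2})$. Let $\mathcal A=\{1,\dots,m\}$, $\mathcal W$ the set of finite words over $\mathcal A$ (including the empty word $\emptyset$); for nonempty $w=j_1\cdots j_n$, $w^-=j_1\cdots j_{n-1}$, and $wj$ is concatenation. WR energy tree: $R_\emptyset=R_0$, and for $w=j_1\cdots j_n$, $n\ge1$, $R_w=R_{w^-}^{1/2}(I-P_{j_n})R_{w^-}^{1/2}$, $D_w=R_{w^-}^{1/2}P_{j_n}R_{w^-}^{1/2}$. $\Omega=\mathcal A^{\mathbb N}$; for $\omega=(j_1,j_2,\dots)$, $\omega|_n=j_1\cdots j_n$, $\omega|_0=\emptyset$; cylinders $[w]=\{\omega:\omega|_{|w|}=w\}$. $R_\infty(\omega)$ is the strong limit of the Loewner-decreasing sequence $R_{\omega|_n}$. $M_n(\omega)=\langle x,R_{\omega|_n}x\rangle$. Energy-biased path measure: with $x$ fixed, $a_{wj}=\langle x,D_{wj}x\rangle$, a fixed probability vector $q$ on $\mathcal A$, $p_x(j\mid w)=a_{wj}/\sum_k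 a_{wk}$ if $\sum_ka_{wk}>0$ and $p_x(j\mid w)=q_j$ otherwise; $\nu_x$ is the unique Borel probability measure on $\Omega$ with $\nu_x([j_1\cdots j_n])=\prod_{i=1}^n p_x(j_i\mid j_1\cdots j_{i-1})$. *)

theory Defs
  imports "HOL-Analysis.Analysis" "HOL-Probability.Probability"
begin

(* A complex Hilbert space H is modelled as a real Hilbert space
   ('a::{real_inner,complete_space}, real inner product = Re of the complex one)
   together with its multiplication-by-i map J. *)
definition cstruct :: "('a::{real_inner,complete_space} \<Rightarrow> 'a) \<Rightarrow> bool" where
  "cstruct J \<longleftrightarrow> bounded_linear J \<and> (\<forall>x. J (J x) = - x) \<and> (\<forall>x y. inner (J x) (J y) = inner x y)"

definition is_op :: "('a::{real_inner,complete_space} \<Rightarrow> 'a) \<Rightarrow> ('a \<Rightarrow> 'a) \<Rightarrow> bool" where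
  "is_op J T \<longleftrightarrow> bounded_linear T \<and> (\<forall>x. T (J x) = J (T x))"

definition pos_op :: "('a::{real_inner,complete_space} \<Rightarrow> 'a) \<Rightarrow> ('a \<Rightarrow> 'a) \<Rightarrow> bool" where
  "pos_op J T \<longleftrightarrow> is_op J T \<and> (\<forall>x y. inner (T x) y = inner x (T y)) \<and> (\<forall>x. 0 \<le> inner x (T x))"

definition orth_proj :: "('a::{real_inner,complete_space} \<Rightarrow> 'a) \<Rightarrow> ('a \<Rightarrow> 'a) \<Rightarrow> bool" where
  "orth_proj J T \<longleftrightarrow> is_op J T \<and> (\<forall>x y. inner (T x) y = inner x (T y)) \<and> (\<forall>x. T (T x) = T x)"

definition op_sqrt :: "('a::{real_inner,complete_space} \<Rightarrow> 'a) \<Rightarrow> ('a \<Rightarrow> 'a)" where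
  "op_sqrt T = (THE S. bounded_linear S \<and> (\<forall>x y. inner (S x) y = inner x (S y))
                      \<and> (\<forall>x. 0 \<le> inner x (S x)) \<and> S \<circ> S = T)"

(* energy tree, indexed by the reversed word (last letter first) *)
fun Rrev :: "(nat \<Rightarrow> 'a \<Rightarrow> 'a) \<Rightarrow> ('a::{real_inner,complete_space} \<Rightarrow> 'a) \<Rightarrow> nat list \<Rightarrow> 'a \<Rightarrow> 'a" where
  "Rrev P R0 [] = R0"
| "Rrev P R0 (j # w) = op_sqrt (Rrev P R0 w) \<circ> (\<lambda>y. y - P j y) \<circ> op_sqrt (Rrev P R0 w)"

definition Rw :: "(nat \<Rightarrow> 'a \<Rightarrow> 'a) \<Rightarrow> ('a::{real_inner,complete_space} \<Rightarrow> 'a) \<Rightarrow> nat list \<Rightarrow> 'a \<Rightarrow> 'a" where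
  "Rw P R0 w = Rrev P R0 (rev w)"

definition Dw :: "(nat \<Rightarrow> 'a \<Rightarrow> 'a) \<Rightarrow> ('a::{real_inner,complete_space} \<Rightarrow> 'a) \<Rightarrow> nat list \<Rightarrow> nat \<Rightarrow> 'a \<Rightarrow> 'a" where
  "Dw P R0 w j = op_sqrt (Rw P R0 w) \<circ> P j \<circ> op_sqrt (Rw P R0 w)"

definition Omega :: "nat \<Rightarrow> (nat \<Rightarrow> nat) measure" where
  "Omega m = PiM UNIV (\<lambda>_. count_space {1..m})"

definition prefix :: "(nat \<Rightarrow> nat) \<Rightarrow> nat \<Rightarrow> nat list" where
  "prefix \<omega> n = map \<omega> [0..<n]"

definition cyl :: "nat \<Rightarrow> nat list \<Rightarrow> (nat \<Rightarrow> nat) set" where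
  "cyl m w = {\<omega> \<in> space (Omega m). prefix \<omega> (length w) = w}"

definition pcond :: "(nat \<Rightarrow> 'a \<Rightarrow> 'a) \<Rightarrow> ('a::{real_inner,complete_space} \<Rightarrow> 'a) \<Rightarrow> nat \<Rightarrow> (nat \<Rightarrow> real)
                     \<Rightarrow> 'a \<Rightarrow> nat list \<Rightarrow> nat \<Rightarrow> real" where
  "pcond P R0 m q x w j =
     (let s = (\<Sum>k=1..m. inner x (Dw P R0 w k x))
      in if s > 0 then inner x (Dw P R0 w j x) / s else q j)"

definition nu :: "(nat \<Rightarrow> 'a \<Rightarrow> 'a) \<Rightarrow> ('a::{real_inner,complete_space} \<Rightarrow> 'a) \<Rightarrow> nat \<Rightarrow> (nat \<Rightarrow> real)
                  \<Rightarrow> 'a \<Rightarrow> (nat \<Rightarrow> nat) measure" where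
  "nu P R0 m q x = (THE N. sets N = sets (Omega m) \<and> prob_space N \<and>
      (\<forall>w. set w \<subseteq> {1..m} \<longrightarrow>
          emeasure N (cyl m w) = ennreal (\<Prod>i<length w. pcond P R0 m q x (take i w) (w ! i))))"

definition Rinf :: "(nat \<Rightarrow> 'a \<Rightarrow> 'a) \<Rightarrow> ('a::{real_inner,complete_space} \<Rightarrow> 'a) \<Rightarrow> (nat \<Rightarrow> nat) \<Rightarrow> 'a \<Rightarrow> 'a" where
  "Rinf P R0 \<omega> y = lim (\<lambda>n. Rw P R0 (prefix \<omega> n) y)"

end

theory Submission
  imports Defs "HOL-Computational_Algebra.Formal_Power_Series"
begin

(* Write M_w = <x, R_w x> and a_wj = <x, D_wj x>. Since R_wj = R_w^(1/2) (I - P_j) R_w^(1/2), the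
   energy splits as M_wj = M_w - a_wj with a_wj >= 0, and since R_w^(1/2) maps into H_0 the splitting
   condition gives sum_j a_wj = M_w. Under the energy-biased kernel p(j|w) = a_wj / M_w the expected
   next energy is M_w - sum_j a_wj^2 / M_w <= (1 - 1/m) M_w by Cauchy-Schwarz, so E[M_n] decays
   geometrically. As M_n is nonincreasing along every path, Markov's inequality upgrades this to
   M_n -> 0 almost surely, and ||R_w x||^2 <= ||R_0|| M_w then forces R_oo(omega) x = 0.
   The operator square roots come from the binomial series of sqrt(1 - t), and nu_x is realised as the
   law of the path driven by independent letters indexed by words. *)

section \<open>Absolutely convergent series\<close>

text \<open>The library version \<open>summable_norm_cancel\<close> needs the sort \<open>banach\<close>, which does not follow
  from \<open>{real_normed_vector, complete_space}\<close>.\<close>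
lemma summable_norm_cancel_complete:
  fixes f :: "nat \<Rightarrow> 'a::{real_normed_vector,complete_space}"
  assumes "summable (\<lambda>n. norm (f n))"
  shows "summable f"
proof -
  have norms: "Cauchy (\<lambda>n. \<Sum>k<n. norm (f k))"
    using assms by (simp add: summable_iff_convergent Cauchy_convergent_iff)
  have ordered: "dist (\<Sum>k<m. f k) (\<Sum>k<n. f k) \<le> dist (\<Sum>k<m. norm (f k)) (\<Sum>k<n. norm (f k))"
    if "m \<le> n" for m n
  proof -
    have diff: "(\<Sum>k<n. g k) - (\<Sum>k<m. g k) = (\<Sum>k=m..<n. g k)" for g :: "nat \<Rightarrow> 'b::ab_group_add"
      using sum_diff_nat_ivl[of 0 m n g] that by (simp add: atLeast0LessThan)
    have "dist (\<Sum>k<m. f k) (\<Sum>k<n. f k) = norm (\<Sum>k=m..<n. f k)"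
      by (metis diff dist_norm dist_commute)
    also have "\<dots> \<le> (\<Sum>k=m..<n. norm (f k))"
      by (rule norm_sum)
    also have "\<dots> = dist (\<Sum>k<m. norm (f k)) (\<Sum>k<n. norm (f k))"
      using diff[of "\<lambda>k. norm (f k)"] sum_nonneg[of "{m..<n}" "\<lambda>k. norm (f k)"]
      by (simp add: dist_real_def)
    finally show ?thesis .
  qed
  have le: "dist (\<Sum>k<m. f k) (\<Sum>k<n. f k) \<le> dist (\<Sum>k<m. norm (f k)) (\<Sum>k<n. norm (f k))" for m n
  proof (cases "m \<le> n")
    case False
    then show ?thesis using ordered[of n m] by (simp add: dist_commute)
  qed (rule ordered)
  have "Cauchy (\<lambda>n. \<Sum>k<n. f k)"
  proof (rule metric_CauchyI)
    fix e :: real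
    assume "0 < e"
    then obtain M where "\<forall>m\<ge>M. \<forall>n\<ge>M. dist (\<Sum>k<m. norm (f k)) (\<Sum>k<n. norm (f k)) < e"
      using metric_CauchyD[OF norms] by blast
    then show "\<exists>M. \<forall>m\<ge>M. \<forall>n\<ge>M. dist (\<Sum>k<m. f k) (\<Sum>k<n. f k) < e"
      using le by (blast intro: le_less_trans)
  qed
  then show ?thesis
    by (simp add: summable_iff_convergent Cauchy_convergent_iff)
qed

text \<open>Convergence of the products of the partial sums has to be assumed, since the codomain need
  not be complete. The square and triangular partial sums are compared via the scalar Cauchy
  product of the norms.\<close>
lemma bounded_bilinear_Cauchy_product_sums:
  fixes a :: "nat \<Rightarrow> 'a::real_normed_vector" and b :: "nat \<Rightarrow> 'b::real_normed_vector"
    and prod :: "'a \<Rightarrow> 'b \<Rightarrow> 'c::real_normed_vector"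
  assumes "bounded_bilinear prod"
    and a: "summable (\<lambda>k. norm (a k))" and b: "summable (\<lambda>k. norm (b k))"
    and lim: "(\<lambda>n. prod (\<Sum>k<n. a k) (\<Sum>k<n. b k)) \<longlonglongrightarrow> L"
  shows "(\<lambda>k. \<Sum>i\<le>k. prod (a i) (b (k - i))) sums L"
proof -
  interpret bounded_bilinear prod by fact
  obtain K where K: "\<And>x y. norm (prod x y) \<le> norm x * norm y * K"
    using pos_bounded by blast
  define square where "square n = {..<n} \<times> {..<n}" for n :: nat
  define triangle where "triangle n = {(i, j). i + j < n}" for n :: nat
  have diff: "sum f (square n - triangle n) = sum f (square n) - sum f (triangle n)"
    for n and f :: "nat \<times> nat \<Rightarrow> 'd::ab_group_add"
    by (rule sum_diff) (auto simp: square_def triangle_def)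
  have "(\<lambda>n. \<Sum>(i, j)\<in>square n. norm (a i) * norm (b j)) \<longlonglongrightarrow> (\<Sum>k. norm (a k)) * (\<Sum>k. norm (b k))"
    using tendsto_mult[OF summable_LIMSEQ[OF a] summable_LIMSEQ[OF b]]
    by (simp add: square_def sum_product sum.cartesian_product)
  moreover have "(\<lambda>n. \<Sum>(i, j)\<in>triangle n. norm (a i) * norm (b j)) \<longlonglongrightarrow> (\<Sum>k. norm (a k)) * (\<Sum>k. norm (b k))"
    using Cauchy_product_sums[of "\<lambda>k. norm (a k)" "\<lambda>k. norm (b k)"] a b
    by (simp add: sums_def triangle_def sum.triangle_reindex)
  ultimately have "(\<lambda>n. (\<Sum>(i, j)\<in>square n. norm (a i) * norm (b j)) - (\<Sum>(i, j)\<in>triangle n. norm (a i) * norm (b j)))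
      \<longlonglongrightarrow> (\<Sum>k. norm (a k)) * (\<Sum>k. norm (b k)) - (\<Sum>k. norm (a k)) * (\<Sum>k. norm (b k))"
    by (rule tendsto_diff)
  then have norms: "(\<lambda>n. \<Sum>(i, j)\<in>square n - triangle n. norm (a i) * norm (b j)) \<longlonglongrightarrow> 0"
    by (simp add: diff)
  have "(\<lambda>n. \<Sum>(i, j)\<in>square n - triangle n. prod (a i) (b j)) \<longlonglongrightarrow> 0"
  proof (rule Lim_null_comparison)
    show "(\<lambda>n. K * (\<Sum>(i, j)\<in>square n - triangle n. norm (a i) * norm (b j))) \<longlonglongrightarrow> 0"
      using tendsto_mult_right_zero[OF norms] .
    show "\<forall>\<^sub>F n in sequentially. norm (\<Sum>(i, j)\<in>square n - triangle n. prod (a i) (b j))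
        \<le> K * (\<Sum>(i, j)\<in>square n - triangle n. norm (a i) * norm (b j))"
      by (intro always_eventually allI order.trans[OF norm_sum])
        (simp add: sum_distrib_left case_prod_unfold sum_mono[OF order.trans[OF K]] ac_simps)
  qed
  moreover have "prod (\<Sum>k<n. a k) (\<Sum>k<n. b k) = (\<Sum>(i, j)\<in>square n. prod (a i) (b j))" for n
    by (simp add: square_def sum_left sum_right sum.cartesian_product[symmetric]) (rule sum.swap)
  with lim have "(\<lambda>n. \<Sum>(i, j)\<in>square n. prod (a i) (b j)) \<longlonglongrightarrow> L"
    by simp
  ultimately have "(\<lambda>n. (\<Sum>(i, j)\<in>square n. prod (a i) (b j)) - (\<Sum>(i, j)\<in>square n - triangle n. prod (a i) (b j)))
      \<longlonglongrightarrow> L - 0"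
    by (intro tendsto_diff)
  then have "(\<lambda>n. \<Sum>(i, j)\<in>triangle n. prod (a i) (b j)) \<longlonglongrightarrow> L"
    by (simp add: diff)
  then show ?thesis
    by (simp add: sums_def triangle_def sum.triangle_reindex)
qed

section \<open>The binomial series of the square root\<close>

definition sqrt_coeff :: "nat \<Rightarrow> real" where
  "sqrt_coeff k = (-1) ^ k * ((1/2) gchoose k)"

lemma sqrt_coeff_pochhammer: "sqrt_coeff k = pochhammer (-1/2) k / fact k"
  by (simp add: sqrt_coeff_def gbinomial_pochhammer)

lemma sqrt_coeff_0 [simp]: "sqrt_coeff 0 = 1"
  by (simp add: sqrt_coeff_def)

lemma sqrt_coeff_Suc_nonpos: "sqrt_coeff (Suc k) \<le> 0"
proof -
  have "0 < pochhammer (1/2 :: real) k" by (rule pochhammer_pos) simp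
  then show ?thesis
    by (simp add: sqrt_coeff_pochhammer pochhammer_rec divide_nonpos_pos)
qed

lemma sum_sqrt_coeff_nonneg: "0 \<le> (\<Sum>k\<le>n. sqrt_coeff k)"
proof -
  have "(\<Sum>k\<le>n. sqrt_coeff k) = (-1) ^ n * ((-1/2) gchoose n)"
    using gbinomial_sum_lower_neg[of "1/2 :: real" n] by (simp add: sqrt_coeff_def mult.commute)
  also have "\<dots> = pochhammer (1/2) n / fact n"
    by (simp add: gbinomial_pochhammer flip: mult.assoc power_mult_distrib)
  also have "\<dots> \<ge> 0" by (simp add: pochhammer_pos less_imp_le)
  finally show ?thesis .
qed

lemma abs_sqrt_coeff: "\<bar>sqrt_coeff k\<bar> = (if k = 0 then 2 else 0) - sqrt_coeff k"
  by (cases k) (auto simp: sqrt_coeff_Suc_nonpos)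

lemma sum_abs_sqrt_coeff_le: "(\<Sum>k<n. \<bar>sqrt_coeff k\<bar>) \<le> 2"
proof (cases n)
  case (Suc n')
  then show ?thesis
    using sum_sqrt_coeff_nonneg[of n'] by (simp add: lessThan_Suc_atMost abs_sqrt_coeff sum_subtractf)
qed simp

lemma summable_abs_sqrt_coeff: "summable (\<lambda>k. \<bar>sqrt_coeff k\<bar>)"
  by (rule summableI_nonneg_bounded[OF abs_ge_zero sum_abs_sqrt_coeff_le])

lemma sqrt_coeff_Cauchy_product:
  "(\<Sum>i\<le>n. sqrt_coeff i * sqrt_coeff (n - i)) = (if n = 0 then 1 else if n = 1 then -1 else 0)"
proof -
  have "(\<Sum>i\<le>n. sqrt_coeff i * sqrt_coeff (n - i)) = (\<Sum>i\<le>n. (-1) ^ n * (((1/2) gchoose i) * ((1/2) gchoose (n - i))))"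
    by (intro sum.cong) (auto simp: sqrt_coeff_def power_add[symmetric])
  also have "\<dots> = (-1) ^ n * ((1::real) gchoose n)"
    using gbinomial_Vandermonde[of "1/2 :: real" "1/2" n]
    by (simp add: sum_distrib_left[symmetric] atLeast0AtMost)
  also have "\<dots> = (-1) ^ n * real (1 choose n)"
    using binomial_gbinomial[of 1 n, where 'a=real] by simp
  also have "\<dots> = (if n = 0 then 1 else if n = 1 then -1 else 0)"
    by (cases n) (auto simp: binomial_eq_0)
  finally show ?thesis .
qed

text \<open>The binomial series of \<open>sqrt (1 - t)\<close> converges at \<open>t = 1\<close> because its terms eventually
  have constant sign; its square is the series of \<open>1 - t\<close>, so the value there is \<open>0\<close>.\<close>
lemma sqrt_coeff_sums: "sqrt_coeff sums 0"
proof -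
  have abs: "summable (\<lambda>k. norm (sqrt_coeff k))"
    using summable_abs_sqrt_coeff by simp
  have "(\<lambda>n. \<Sum>i\<le>n. sqrt_coeff i * sqrt_coeff (n - i)) sums (suminf sqrt_coeff * suminf sqrt_coeff)"
    by (rule Cauchy_product_sums[OF abs abs])
  moreover have "(\<lambda>n. \<Sum>i\<le>n. sqrt_coeff i * sqrt_coeff (n - i)) sums (\<Sum>n\<in>{0,1}. \<Sum>i\<le>n. sqrt_coeff i * sqrt_coeff (n - i))"
    by (rule sums_finite) (auto simp: sqrt_coeff_Cauchy_product)
  ultimately have "suminf sqrt_coeff * suminf sqrt_coeff = 0"
    by (simp add: sums_iff sqrt_coeff_Cauchy_product)
  then show ?thesis
    using summable_rabs_cancel[OF summable_abs_sqrt_coeff] by (simp add: sums_iff)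
qed

section \<open>Positive operators\<close>

definition selfadjoint :: "('a::real_inner \<Rightarrow> 'a) \<Rightarrow> bool" where
  "selfadjoint T \<longleftrightarrow> (\<forall>x y. inner (T x) y = inner x (T y))"

definition positive_op :: "('a::real_inner \<Rightarrow> 'a) \<Rightarrow> bool" where
  "positive_op T \<longleftrightarrow> bounded_linear T \<and> selfadjoint T \<and> (\<forall>x. 0 \<le> inner x (T x))"

definition orth_projection :: "('a::real_inner \<Rightarrow> 'a) \<Rightarrow> bool" where
  "orth_projection T \<longleftrightarrow> bounded_linear T \<and> selfadjoint T \<and> (\<forall>x. T (T x) = T x)"

lemma positive_opD:
  assumes "positive_op T"
  shows "bounded_linear T" "inner (T x) y = inner x (T y)" "0 \<le> inner x (T x)"
  using assms by (auto simp: positive_op_def selfadjoint_def)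

lemma pos_op_imp_positive_op: "pos_op J T \<Longrightarrow> positive_op T"
  by (simp add: pos_op_def is_op_def positive_op_def selfadjoint_def)

lemma orth_proj_imp_orth_projection: "orth_proj J T \<Longrightarrow> orth_projection T"
  by (simp add: orth_proj_def is_op_def orth_projection_def selfadjoint_def)

lemma quadratic_nonneg_imp_discrim_le:
  fixes a b c :: real
  assumes c: "0 \<le> c" and nonneg: "\<And>t. 0 \<le> a + 2 * t * b + t\<^sup>2 * c"
  shows "b\<^sup>2 \<le> a * c"
proof (cases "c = 0")
  case True
  have "b = 0"
  proof (rule ccontr)
    assume "b \<noteq> 0"
    then have "a + 2 * (-(a + 1) / (2 * b)) * b + (-(a + 1) / (2 * b))\<^sup>2 * c = -1"
      using True by (simp add: field_simps)
    then show False
      using nonneg[of "-(a + 1) / (2 * b)"] by simp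
  qed
  then show ?thesis
    using nonneg[of 0] True by simp
next
  case False
  then have "0 < c" using c by simp
  have "0 \<le> a + 2 * (-b / c) * b + (-b / c)\<^sup>2 * c" by (rule nonneg)
  also have "\<dots> = a - b\<^sup>2 / c"
    using \<open>0 < c\<close> by (simp add: field_simps power2_eq_square)
  finally have "b\<^sup>2 / c \<le> a" by simp
  then show ?thesis
    using \<open>0 < c\<close> by (simp add: divide_le_eq mult.commute)
qed

lemma positive_op_Cauchy_Schwarz:
  assumes T: "positive_op T"
  shows "(inner u (T v))\<^sup>2 \<le> inner u (T u) * inner v (T v)"
proof (rule quadratic_nonneg_imp_discrim_le)
  interpret bounded_linear T using positive_opD(1)[OF T] .
  have sym: "inner v (T u) = inner u (T v)"
    using positive_opD(2)[OF T, of v u] by (simp add: inner_commute)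
  show "0 \<le> inner v (T v)" by (rule positive_opD(3)[OF T])
  fix t :: real
  have "0 \<le> inner (u + t *\<^sub>R v) (T (u + t *\<^sub>R v))" by (rule positive_opD(3)[OF T])
  also have "\<dots> = inner u (T u) + 2 * t * inner u (T v) + t\<^sup>2 * inner v (T v)"
    by (simp add: add scaleR inner_add_left inner_add_right sym power2_eq_square algebra_simps)
  finally show "0 \<le> inner u (T u) + 2 * t * inner u (T v) + t\<^sup>2 * inner v (T v)" .
qed

lemma positive_op_eq_0:
  assumes T: "positive_op T" and "inner y (T y) = 0"
  shows "T y = 0"
proof -
  have "(inner (T y) (T y))\<^sup>2 \<le> inner (T y) (T (T y)) * inner y (T y)"
    using positive_op_Cauchy_Schwarz[OF T, of "T y" y] positive_opD(2)[OF T, of y "T y"]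
    by (simp add: inner_commute)
  then show ?thesis using assms(2) by simp
qed

lemma positive_op_norm_sq_le:
  assumes T: "positive_op T" and K: "0 \<le> K" and bound: "\<And>z. inner z (T z) \<le> K * (norm z)\<^sup>2"
  shows "(norm (T y))\<^sup>2 \<le> K * inner y (T y)"
proof (cases "T y = 0")
  case True
  then show ?thesis using K positive_opD(3)[OF T, of y] by simp
next
  case False
  have "((norm (T y))\<^sup>2)\<^sup>2 = (inner (T y) (T y))\<^sup>2"
    by (simp add: power2_norm_eq_inner)
  also have "\<dots> \<le> inner (T y) (T (T y)) * inner y (T y)"
    using positive_op_Cauchy_Schwarz[OF T, of "T y" y] positive_opD(2)[OF T, of y "T y"]
    by (simp add: inner_commute)
  also have "\<dots> \<le> (K * (norm (T y))\<^sup>2) * inner y (T y)"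
    by (intro mult_right_mono bound positive_opD(3)[OF T])
  finally show ?thesis
    using False by (simp add: power2_eq_square mult_ac)
qed

lemma positive_op_norm_le:
  assumes T: "positive_op T" and K: "0 \<le> K" and bound: "\<And>z. inner z (T z) \<le> K * (norm z)\<^sup>2"
  shows "norm (T y) \<le> K * norm y"
proof -
  have "(norm (T y))\<^sup>2 \<le> K * inner y (T y)"
    by (rule positive_op_norm_sq_le[OF assms])
  also have "\<dots> \<le> K * (norm y * norm (T y))"
    by (intro mult_left_mono norm_cauchy_schwarz K)
  finally have "norm (T y) * norm (T y) \<le> (K * norm y) * norm (T y)"
    by (simp only: power2_eq_square mult.assoc)
  then show ?thesis
    using K by (cases "T y = 0") (auto intro: mult_right_le_imp_le)
qed

lemma positive_op_sandwich:
  assumes S: "positive_op S" and Q: "positive_op Q"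
  shows "positive_op (\<lambda>y. S (Q (S y)))"
  unfolding positive_op_def selfadjoint_def
proof (intro conjI allI)
  show "bounded_linear (\<lambda>y. S (Q (S y)))"
    using bounded_linear_compose[OF positive_opD(1)[OF S]
        bounded_linear_compose[OF positive_opD(1)[OF Q] positive_opD(1)[OF S]]] .
  fix x y
  have "inner (S (Q (S x))) y = inner (Q (S x)) (S y)" by (rule positive_opD(2)[OF S])
  also have "\<dots> = inner (S x) (Q (S y))" by (rule positive_opD(2)[OF Q])
  also have "\<dots> = inner x (S (Q (S y)))" by (rule positive_opD(2)[OF S])
  finally show "inner (S (Q (S x))) y = inner x (S (Q (S y)))" .
  have "inner x (S (Q (S x))) = inner (S x) (Q (S x))" by (rule positive_opD(2)[OF S, symmetric])
  then show "0 \<le> inner x (S (Q (S x)))" using positive_opD(3)[OF Q] by simp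
qed

lemma inner_orth_projection:
  assumes "orth_projection P"
  shows "inner x (P x) = inner (P x) (P x)"
  using assms unfolding orth_projection_def selfadjoint_def by metis

lemma orth_projection_imp_positive_op:
  assumes P: "orth_projection P"
  shows "positive_op P"
  using P inner_orth_projection[OF P] by (simp add: orth_projection_def positive_op_def)

lemma orth_projection_complement:
  assumes P: "orth_projection P"
  shows "orth_projection (\<lambda>x. x - P x)"
  unfolding orth_projection_def selfadjoint_def
proof (intro conjI allI)
  interpret bounded_linear P using P by (simp add: orth_projection_def)
  show "bounded_linear (\<lambda>x. x - P x)"
    by (intro bounded_linear_sub bounded_linear_ident bounded_linear_axioms)
  show "inner (x - P x) y = inner x (y - P y)" for x y
    using P by (simp add: orth_projection_def selfadjoint_def inner_diff_left inner_diff_right)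
  show "x - P x - P (x - P x) = x - P x" for x
    using P by (simp add: orth_projection_def diff)
qed

section \<open>Square roots of positive operators\<close>

primrec blinfun_pow :: "('a::real_normed_vector \<Rightarrow>\<^sub>L 'a) \<Rightarrow> nat \<Rightarrow> 'a \<Rightarrow>\<^sub>L 'a" where
  "blinfun_pow A 0 = id_blinfun"
| "blinfun_pow A (Suc k) = A o\<^sub>L blinfun_pow A k"

lemma blinfun_pow_add: "blinfun_pow A (i + j) = blinfun_pow A i o\<^sub>L blinfun_pow A j"
  by (induction i) (auto intro!: blinfun_eqI)

lemma norm_blinfun_pow_le:
  assumes "norm A \<le> 1"
  shows "norm (blinfun_pow A k) \<le> 1"
proof (induction k)
  case 0
  then show ?case by (simp add: norm_blinfun_id_le)
next
  case (Suc k)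
  have "norm (blinfun_pow A (Suc k)) \<le> norm A * norm (blinfun_pow A k)"
    by (simp add: norm_blinfun_compose)
  also have "\<dots> \<le> 1"
    using assms Suc by (simp add: mult_le_one)
  finally show ?case .
qed

lemma blinfun_pow_commute:
  fixes A :: "'a::real_normed_vector \<Rightarrow>\<^sub>L 'a"
  assumes "\<And>y. F (A y) = A (F y)"
  shows "F (blinfun_pow A k y) = blinfun_pow A k (F y)"
  using assms by (induction k arbitrary: y) auto

lemma selfadjoint_blinfun_pow:
  assumes A: "selfadjoint (blinfun_apply A)"
  shows "selfadjoint (blinfun_apply (blinfun_pow A k))"
  unfolding selfadjoint_def
proof (induction k)
  case (Suc k)
  show ?case
  proof (intro allI)
    fix x y
    have "inner (A (blinfun_pow A k x)) y = inner (blinfun_pow A k x) (A y)"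
      using A by (simp add: selfadjoint_def)
    also have "\<dots> = inner x (blinfun_pow A k (A y))"
      using Suc by blast
    also have "\<dots> = inner x (A (blinfun_pow A k y))"
      by (simp add: blinfun_pow_commute[of A A])
    finally show "inner (blinfun_pow A (Suc k) x) y = inner x (blinfun_pow A (Suc k) y)"
      by simp
  qed
qed simp

definition sqrt_id_minus :: "('a::real_normed_vector \<Rightarrow>\<^sub>L 'a) \<Rightarrow> 'a \<Rightarrow> 'a" where
  "sqrt_id_minus A y = (\<Sum>k. sqrt_coeff k *\<^sub>R blinfun_pow A k y)"

context
  fixes A :: "'a::{real_inner,complete_space} \<Rightarrow>\<^sub>L 'a"
  assumes norm_A: "norm A \<le> 1"
begin

lemma norm_blinfun_pow_apply_le: "norm (blinfun_pow A k y) \<le> norm y"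
  using norm_blinfun[of "blinfun_pow A k" y] norm_blinfun_pow_le[OF norm_A, of k]
  by (meson mult_left_le_one_le norm_ge_zero order_trans)

lemma summable_norm_sqrt_series: "summable (\<lambda>k. norm (sqrt_coeff k *\<^sub>R blinfun_pow A k))"
  by (rule summable_comparison_test'[OF summable_abs_sqrt_coeff])
    (simp add: mult_left_le norm_blinfun_pow_le[OF norm_A])

lemma summable_norm_sqrt_series_apply: "summable (\<lambda>k. norm (sqrt_coeff k *\<^sub>R blinfun_pow A k y))"
  by (rule summable_comparison_test'[OF summable_mult2[OF summable_abs_sqrt_coeff, of "norm y"]])
    (simp add: mult_left_mono norm_blinfun_pow_apply_le)

lemma sqrt_id_minus_sums: "(\<lambda>k. sqrt_coeff k *\<^sub>R blinfun_pow A k y) sums sqrt_id_minus A y"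
  unfolding sqrt_id_minus_def
  by (rule summable_sums[OF summable_norm_cancel_complete[OF summable_norm_sqrt_series_apply]])

lemma norm_sqrt_series_partial_le: "norm (\<Sum>k<n. sqrt_coeff k *\<^sub>R blinfun_pow A k y) \<le> 2 * norm y"
proof -
  have "norm (\<Sum>k<n. sqrt_coeff k *\<^sub>R blinfun_pow A k y) \<le> (\<Sum>k<n. \<bar>sqrt_coeff k\<bar> * norm y)"
    by (rule order.trans[OF norm_sum sum_mono]) (simp add: mult_left_mono norm_blinfun_pow_apply_le)
  also have "\<dots> \<le> 2 * norm y"
    by (simp add: sum_distrib_right[symmetric] mult_right_mono sum_abs_sqrt_coeff_le)
  finally show ?thesis .
qed

lemma bounded_linear_sqrt_id_minus: "bounded_linear (sqrt_id_minus A)"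
proof (rule bounded_linear_intro[where K=2])
  show "sqrt_id_minus A (x + y) = sqrt_id_minus A x + sqrt_id_minus A y" for x y
    using sums_add[OF sqrt_id_minus_sums[of x] sqrt_id_minus_sums[of y]] sqrt_id_minus_sums[of "x + y"]
    by (simp add: blinfun.add_right scaleR_add_right sums_unique2)
  show "sqrt_id_minus A (r *\<^sub>R x) = r *\<^sub>R sqrt_id_minus A x" for r x
    using sums_scaleR_right[OF sqrt_id_minus_sums[of x], of r] sqrt_id_minus_sums[of "r *\<^sub>R x"]
    by (simp add: blinfun.scaleR_right mult.commute sums_unique2)
  show "norm (sqrt_id_minus A x) \<le> norm x * 2" for x
    using Lim_norm_ubound[OF _ sqrt_id_minus_sums[of x, unfolded sums_def]] norm_sqrt_series_partial_le
    by (simp add: mult.commute)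
qed

lemma sqrt_id_minus_nonneg: "0 \<le> inner x (sqrt_id_minus A x)"
proof -
  have series: "(\<lambda>k. sqrt_coeff k * inner x (blinfun_pow A k x)) sums inner x (sqrt_id_minus A x)"
    using bounded_linear.sums[OF bounded_linear_inner_right[of x] sqrt_id_minus_sums[of x]] by simp
  have zero: "(\<lambda>k. sqrt_coeff k * (norm x)\<^sup>2) sums 0"
    using sums_mult2[OF sqrt_coeff_sums, of "(norm x)\<^sup>2"] by simp
  have termwise: "sqrt_coeff k * (norm x)\<^sup>2 \<le> sqrt_coeff k * inner x (blinfun_pow A k x)" for k
  proof (cases k)
    case (Suc k')
    have "inner x (blinfun_pow A k x) \<le> norm x * norm (blinfun_pow A k x)"
      by (rule norm_cauchy_schwarz)
    also have "\<dots> \<le> (norm x)\<^sup>2"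
      by (simp add: power2_eq_square mult_left_mono norm_blinfun_pow_apply_le)
    finally show ?thesis
      using Suc sqrt_coeff_Suc_nonpos[of k'] by (simp add: mult_left_mono_neg)
  qed (simp add: power2_norm_eq_inner)
  show ?thesis
    by (rule sums_le[OF termwise zero series])
qed

lemma selfadjoint_sqrt_id_minus:
  assumes "selfadjoint (blinfun_apply A)"
  shows "selfadjoint (sqrt_id_minus A)"
  unfolding selfadjoint_def
proof (intro allI)
  fix x y
  have "(\<lambda>k. sqrt_coeff k * inner (blinfun_pow A k x) y) sums inner (sqrt_id_minus A x) y"
    using bounded_linear.sums[OF bounded_linear_inner_left[of y] sqrt_id_minus_sums[of x]] by simp
  moreover have "(\<lambda>k. sqrt_coeff k * inner x (blinfun_pow A k y)) sums inner x (sqrt_id_minus A y)"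
    using bounded_linear.sums[OF bounded_linear_inner_right[of x] sqrt_id_minus_sums[of y]] by simp
  ultimately show "inner (sqrt_id_minus A x) y = inner x (sqrt_id_minus A y)"
    using selfadjoint_blinfun_pow[OF assms] by (simp add: selfadjoint_def sums_unique2)
qed

lemma sqrt_id_minus_commute:
  assumes F: "bounded_linear F" and FA: "\<And>z. F (A z) = A (F z)"
  shows "F (sqrt_id_minus A y) = sqrt_id_minus A (F y)"
proof -
  interpret bounded_linear F by (rule F)
  have "(\<lambda>k. sqrt_coeff k *\<^sub>R blinfun_pow A k (F y)) sums F (sqrt_id_minus A y)"
    using sums[OF sqrt_id_minus_sums[of y]] by (simp add: scaleR blinfun_pow_commute[of F A, OF FA])
  then show ?thesis
    using sqrt_id_minus_sums[of "F y"] by (rule sums_unique2)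
qed

lemma sqrt_id_minus_sqr: "sqrt_id_minus A (sqrt_id_minus A y) = y - A y"
proof -
  let ?S = "sqrt_id_minus A"
  let ?a = "\<lambda>k. sqrt_coeff k *\<^sub>R blinfun_pow A k" and ?b = "\<lambda>k. sqrt_coeff k *\<^sub>R blinfun_pow A k y"
  have partial_apply: "blinfun_apply (\<Sum>k<n. ?a k) z = (\<Sum>k<n. sqrt_coeff k *\<^sub>R blinfun_pow A k z)" for n z
    by (simp add: blinfun.sum_left blinfun.scaleR_left)
  have partial_lim: "(\<lambda>n. \<Sum>k<n. sqrt_coeff k *\<^sub>R blinfun_pow A k z) \<longlonglongrightarrow> ?S z" for z
    using sqrt_id_minus_sums[of z] by (simp add: sums_def)
  have "(\<lambda>n. blinfun_apply (\<Sum>k<n. ?a k) ((\<Sum>k<n. ?b k) - ?S y)) \<longlonglongrightarrow> 0"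
  proof (rule Lim_null_comparison)
    show "\<forall>\<^sub>F n in sequentially. norm (blinfun_apply (\<Sum>k<n. ?a k) ((\<Sum>k<n. ?b k) - ?S y))
        \<le> 2 * norm ((\<Sum>k<n. ?b k) - ?S y)"
      by (simp add: partial_apply norm_sqrt_series_partial_le)
    show "(\<lambda>n. 2 * norm ((\<Sum>k<n. ?b k) - ?S y)) \<longlonglongrightarrow> 0"
      using tendsto_mult_right_zero[OF tendsto_norm_zero[OF LIM_zero[OF partial_lim]]] .
  qed
  from tendsto_add[OF this partial_lim[of "?S y"]]
  have "(\<lambda>n. blinfun_apply (\<Sum>k<n. ?a k) (\<Sum>k<n. ?b k)) \<longlonglongrightarrow> ?S (?S y)"
    by (simp add: blinfun.diff_right partial_apply)
  then have "(\<lambda>n. \<Sum>i\<le>n. blinfun_apply (?a i) (?b (n - i))) sums ?S (?S y)"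
    by (rule bounded_bilinear_Cauchy_product_sums[OF bounded_bilinear_blinfun_apply
          summable_norm_sqrt_series summable_norm_sqrt_series_apply])
  moreover have "(\<Sum>i\<le>n. blinfun_apply (?a i) (?b (n - i)))
      = (\<Sum>i\<le>n. sqrt_coeff i * sqrt_coeff (n - i)) *\<^sub>R blinfun_pow A n y" for n
    unfolding scaleR_sum_left
  proof (rule sum.cong)
    fix i
    assume "i \<in> {..n}"
    then have "blinfun_pow A n = blinfun_pow A i o\<^sub>L blinfun_pow A (n - i)"
      using blinfun_pow_add[of A i "n - i"] by simp
    then show "blinfun_apply (?a i) (?b (n - i)) = (sqrt_coeff i * sqrt_coeff (n - i)) *\<^sub>R blinfun_pow A n y"
      by (simp add: blinfun.scaleR_left blinfun.scaleR_right)
  qed simp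
  ultimately have "(\<lambda>n. (\<Sum>i\<le>n. sqrt_coeff i * sqrt_coeff (n - i)) *\<^sub>R blinfun_pow A n y) sums ?S (?S y)"
    by simp
  moreover have "(\<lambda>n. (\<Sum>i\<le>n. sqrt_coeff i * sqrt_coeff (n - i)) *\<^sub>R blinfun_pow A n y) sums (y - A y)"
    using sums_finite[of "{0, 1}" "\<lambda>n. (\<Sum>i\<le>n. sqrt_coeff i * sqrt_coeff (n - i)) *\<^sub>R blinfun_pow A n y"]
    by (simp add: sqrt_coeff_Cauchy_product)
  ultimately show ?thesis
    by (rule sums_unique2)
qed

lemma sqrt_id_minus_in_closure_range: "sqrt_id_minus A y \<in> closure (range (\<lambda>z. z - A z))"
proof -
  let ?V = "range (\<lambda>z. z - A z)"
  have V: "subspace ?V"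
    using linear_subspace_image[OF bounded_linear.linear[OF
          bounded_linear_sub[OF bounded_linear_ident blinfun.bounded_linear_right]] subspace_UNIV] .
  have pow_minus_id: "blinfun_pow A k y - y \<in> ?V" for k
  proof (induction k)
    case (Suc k)
    have "blinfun_pow A (Suc k) y - y = (blinfun_pow A k y - y) - (blinfun_pow A k y - A (blinfun_pow A k y))"
      by simp
    then show ?case
      using subspace_diff[OF V Suc] by (metis rangeI)
  qed (simp add: subspace_0[OF V])
  define u where "u n = (\<Sum>k<n. sqrt_coeff k *\<^sub>R blinfun_pow A k y) - (\<Sum>k<n. sqrt_coeff k) *\<^sub>R y" for n
  have "u \<longlonglongrightarrow> sqrt_id_minus A y - 0 *\<^sub>R y"
    unfolding u_def using sqrt_id_minus_sums[of y] sqrt_coeff_sums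
    by (intro tendsto_diff tendsto_scaleR tendsto_const) (simp_all add: sums_def)
  moreover have "u n \<in> ?V" for n
    using subspace_sum[OF V, of "{..<n}" "\<lambda>k. sqrt_coeff k *\<^sub>R (blinfun_pow A k y - y)"]
      subspace_scale[OF V pow_minus_id]
    by (simp add: u_def scaleR_diff_right sum_subtractf scaleR_sum_left)
  ultimately show ?thesis
    unfolding closure_sequential by (intro exI[of _ u]) simp
qed

end

lemma inner_apply_le_onorm:
  assumes "bounded_linear T"
  shows "inner y (T y) \<le> onorm T * (norm y)\<^sup>2"
proof -
  have "inner y (T y) \<le> norm y * norm (T y)"
    by (rule norm_cauchy_schwarz)
  also have "\<dots> \<le> norm y * (onorm T * norm y)"
    by (intro mult_left_mono onorm[OF assms]) simp
  finally show ?thesis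
    by (simp add: power2_eq_square ac_simps)
qed

lemma positive_op_id_minus_scaled:
  assumes T: "positive_op T" and c: "onorm T \<le> c" "0 < c"
  shows "positive_op (\<lambda>y. y - (1/c) *\<^sub>R T y)" "norm (y - (1/c) *\<^sub>R T y) \<le> norm y"
proof -
  have T_bl: "bounded_linear T"
    using positive_opD(1)[OF T] .
  have inner_eq: "inner y (y - (1/c) *\<^sub>R T y) = (norm y)\<^sup>2 - inner y (T y) / c" for y
    by (simp add: inner_diff_right power2_norm_eq_inner)
  have bound: "inner y (T y) \<le> c * (norm y)\<^sup>2" for y
    using inner_apply_le_onorm[OF T_bl, of y] mult_right_mono[OF c(1) zero_le_power2[of "norm y"]] by linarith
  show pos: "positive_op (\<lambda>y. y - (1/c) *\<^sub>R T y)"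
    unfolding positive_op_def selfadjoint_def
  proof (intro conjI allI)
    show "bounded_linear (\<lambda>y. y - (1/c) *\<^sub>R T y)"
      by (intro bounded_linear_sub bounded_linear_ident bounded_linear_compose[OF bounded_linear_scaleR_right T_bl])
    show "inner (x - (1/c) *\<^sub>R T x) y = inner x (y - (1/c) *\<^sub>R T y)" for x y
      by (simp add: inner_diff_left inner_diff_right positive_opD(2)[OF T])
    show "0 \<le> inner x (x - (1/c) *\<^sub>R T x)" for x
      using bound[of x] by (simp add: inner_eq pos_divide_le_eq[OF c(2)] mult.commute)
  qed
  have "inner z (z - (1/c) *\<^sub>R T z) \<le> 1 * (norm z)\<^sup>2" for z
    using positive_opD(3)[OF T, of z] c(2) by (simp add: inner_eq)
  then show "norm (y - (1/c) *\<^sub>R T y) \<le> norm y"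
    using positive_op_norm_le[OF pos, of 1 y] by simp
qed

lemma positive_op_sqrt_exists:
  fixes T :: "'a::{real_inner,complete_space} \<Rightarrow> 'a"
  assumes T: "positive_op T"
  obtains S where "positive_op S" "\<And>y. S (S y) = T y" "\<And>y. S y \<in> closure (range T)"
    "\<And>F y. bounded_linear F \<Longrightarrow> (\<And>z. F (T z) = T (F z)) \<Longrightarrow> F (S y) = S (F y)"
proof -
  interpret T: bounded_linear T
    using positive_opD(1)[OF T] .
  define c where "c = onorm T + 1"
  have c: "onorm T \<le> c" "0 < c"
    using onorm_pos_le[OF T.bounded_linear_axioms] by (simp_all add: c_def)
  define A where "A = Blinfun (\<lambda>y. y - (1/c) *\<^sub>R T y)"
  have A_apply: "blinfun_apply A = (\<lambda>y. y - (1/c) *\<^sub>R T y)"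
    unfolding A_def using positive_opD(1)[OF positive_op_id_minus_scaled(1)[OF T c]]
    by (rule bounded_linear_Blinfun_apply)
  have A_sa: "selfadjoint (blinfun_apply A)"
    using positive_op_id_minus_scaled(1)[OF T c] by (simp add: A_apply positive_op_def)
  have "norm A \<le> 1"
    by (rule norm_blinfun_bound) (simp_all add: A_apply positive_op_id_minus_scaled(2)[OF T c])
  note sqrt = bounded_linear_sqrt_id_minus[OF this] sqrt_id_minus_nonneg[OF this]
    selfadjoint_sqrt_id_minus[OF this] sqrt_id_minus_sqr[OF this] sqrt_id_minus_in_closure_range[OF this]
    sqrt_id_minus_commute[OF this]
  interpret sqrt: bounded_linear "sqrt_id_minus A"
    by (rule sqrt(1))
  define S where "S y = sqrt_id_minus A (sqrt c *\<^sub>R y)" for y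
  have S_scaleR: "S y = sqrt c *\<^sub>R sqrt_id_minus A y" for y
    by (simp add: S_def sqrt.scaleR)
  show ?thesis
  proof
    show "positive_op S"
      unfolding positive_op_def
    proof (intro conjI)
      show "bounded_linear S"
        unfolding S_def by (rule bounded_linear_compose[OF sqrt(1) bounded_linear_scaleR_right])
      show "selfadjoint S"
        using sqrt(3)[OF A_sa] by (simp add: selfadjoint_def S_scaleR)
      show "\<forall>x. 0 \<le> inner x (S x)"
        using c(2) by (simp add: S_scaleR sqrt(2))
    qed
    show "S (S y) = T y" for y
      using c(2) by (simp add: S_def sqrt.scaleR sqrt(4) A_apply)
    have "range (\<lambda>z. z - A z) \<subseteq> range T"
      by (auto simp: A_apply T.scaleR[symmetric])
    then show "S y \<in> closure (range T)" for y
      using sqrt(5)[of "sqrt c *\<^sub>R y"] closure_mono unfolding S_def by blast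
    show "F (S y) = S (F y)" if F: "bounded_linear F" and FT: "\<And>z. F (T z) = T (F z)" for F y
    proof -
      interpret F: bounded_linear F by (rule F)
      have "F (A z) = A (F z)" for z
        by (simp add: A_apply F.diff F.scaleR FT)
      then show ?thesis
        by (simp add: S_def sqrt(6)[OF F] F.scaleR)
    qed
  qed
qed

lemma positive_op_sqrt_unique:
  assumes S: "positive_op S" and S': "positive_op S'"
    and sqr: "\<And>y. S' (S' y) = S (S y)" and comm: "\<And>y. S' (S y) = S (S' y)"
  shows "S' = S"
proof
  fix y
  interpret S: bounded_linear S using positive_opD(1)[OF S] .
  interpret S': bounded_linear S' using positive_opD(1)[OF S'] .
  define z where "z = S y - S' y"
  have "S z + S' z = 0"
    unfolding z_def by (simp add: S.diff S'.diff sqr comm)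
  then have "inner z (S z) + inner z (S' z) = 0"
    by (simp flip: inner_add_right)
  then have "inner z (S z) = 0" "inner z (S' z) = 0"
    using positive_opD(3)[OF S, of z] positive_opD(3)[OF S', of z] by linarith+
  then have "S z = 0" "S' z = 0"
    by (simp_all add: positive_op_eq_0[OF S] positive_op_eq_0[OF S'])
  have "inner z z = inner y (S z) - inner y (S' z)"
    unfolding z_def by (simp add: inner_diff_left positive_opD(2)[OF S] positive_opD(2)[OF S'])
  with \<open>S z = 0\<close> \<open>S' z = 0\<close> show "S' y = S y"
    by (simp add: z_def)
qed

lemma op_sqrt_spec:
  fixes T :: "'a::{real_inner,complete_space} \<Rightarrow> 'a"
  assumes T: "positive_op T"
  shows "positive_op (op_sqrt T)" "op_sqrt T (op_sqrt T y) = T y" "op_sqrt T y \<in> closure (range T)"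
proof -
  obtain S where S: "positive_op S" "\<And>y. S (S y) = T y" "\<And>y. S y \<in> closure (range T)"
    and comm: "\<And>F y. bounded_linear F \<Longrightarrow> (\<And>z. F (T z) = T (F z)) \<Longrightarrow> F (S y) = S (F y)"
    using positive_op_sqrt_exists[OF T] by blast
  have "op_sqrt T = S"
    unfolding op_sqrt_def
  proof (rule the_equality)
    show "bounded_linear S \<and> (\<forall>x y. inner (S x) y = inner x (S y)) \<and> (\<forall>x. 0 \<le> inner x (S x)) \<and> S \<circ> S = T"
      using S by (auto simp: positive_op_def selfadjoint_def)
  next
    fix S'
    assume "bounded_linear S' \<and> (\<forall>x y. inner (S' x) y = inner x (S' y)) \<and> (\<forall>x. 0 \<le> inner x (S' x)) \<and> S' \<circ> S' = T"
    then have S': "positive_op S'" and sqr': "\<And>y. S' (S' y) = T y"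
      by (auto simp: positive_op_def selfadjoint_def fun_eq_iff)
    have "S' (S y) = S (S' y)" for y
      by (rule comm[OF positive_opD(1)[OF S']]) (simp flip: sqr')
    then show "S' = S"
      using positive_op_sqrt_unique[OF S(1) S'] S(2) sqr' by simp
  qed
  then show "positive_op (op_sqrt T)" "op_sqrt T (op_sqrt T y) = T y" "op_sqrt T y \<in> closure (range T)"
    using S by simp_all
qed

section \<open>The energy tree\<close>

lemma Rw_Nil [simp]: "Rw P R0 [] = R0"
  by (simp add: Rw_def)

lemma Rw_snoc:
  "Rw P R0 (w @ [j]) = (\<lambda>y. op_sqrt (Rw P R0 w) (op_sqrt (Rw P R0 w) y - P j (op_sqrt (Rw P R0 w) y)))"
  by (simp add: Rw_def fun_eq_iff)

lemma inner_Dw: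
  assumes "positive_op (op_sqrt (Rw P R0 w))"
  shows "inner x (Dw P R0 w j x) = inner (op_sqrt (Rw P R0 w) x) (P j (op_sqrt (Rw P R0 w) x))"
  using positive_opD(2)[OF assms, of x "P j (op_sqrt (Rw P R0 w) x)"] by (simp add: Dw_def)

lemma sum_pcond:
  assumes "(\<Sum>j=1..m. q j) = 1"
  shows "(\<Sum>j=1..m. pcond P R0 m q x w j) = 1"
proof (cases "0 < (\<Sum>k=1..m. inner x (Dw P R0 w k x))")
  case True
  then show ?thesis by (simp add: pcond_def sum_divide_distrib[symmetric])
next
  case False
  then show ?thesis using assms by (simp add: pcond_def)
qed

text \<open>The left-hand side is the expected energy after one step of the energy-biased walk from a
  word of energy \<open>s\<close>, with step weights \<open>a i\<close>.\<close>
lemma sum_mult_complement_le: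
  fixes a :: "'i \<Rightarrow> real"
  assumes "finite I" "sum a I = s" "0 < s"
  shows "(\<Sum>i\<in>I. a i / s * (s - a i)) \<le> (1 - 1 / card I) * s"
proof -
  have "I \<noteq> {}" using assms by auto
  then have card: "0 < real (card I)" using assms(1) by (simp add: card_gt_0_iff)
  have "s\<^sup>2 \<le> (\<Sum>i\<in>I. (a i)\<^sup>2) * card I"
    using sum_squared_le_sum_of_squares[of a I] assms(2) by simp
  then have "s\<^sup>2 / card I / s \<le> (\<Sum>i\<in>I. (a i)\<^sup>2) / s"
    using card assms(3) by (intro divide_right_mono) (simp_all add: divide_le_eq)
  moreover have "(\<Sum>i\<in>I. a i / s * (s - a i)) = s - (\<Sum>i\<in>I. (a i)\<^sup>2) / s"
  proof -
    have "a i / s * (s - a i) = a i - (a i)\<^sup>2 / s" for i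
      using assms(3) by (simp add: field_simps power2_eq_square)
    then show ?thesis
      using assms(2) by (simp add: sum_subtractf sum_divide_distrib)
  qed
  moreover have "(1 - 1 / card I) * s = s - s\<^sup>2 / card I / s"
    using card assms(3) by (simp add: field_simps power2_eq_square)
  ultimately show ?thesis by linarith
qed

lemma inner_sandwich_complement_le:
  assumes S: "positive_op S" and P: "orth_projection P"
  shows "inner y (S (S y - P (S y))) \<le> inner y (S (S y))"
proof -
  have "inner y (S (S y - P (S y))) = inner (S y) (S y) - inner (S y) (P (S y))"
    by (simp add: positive_opD(2)[OF S, symmetric] inner_diff_right)
  also have "\<dots> \<le> inner (S y) (S y)"
    using positive_opD(3)[OF orth_projection_imp_positive_op[OF P]] by simp
  also have "\<dots> = inner y (S (S y))"
    by (simp add: positive_opD(2)[OF S])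
  finally show ?thesis .
qed

locale energy_tree =
  fixes P :: "nat \<Rightarrow> 'a::{real_inner,complete_space} \<Rightarrow> 'a" and R0 :: "'a \<Rightarrow> 'a" and m :: nat
  assumes positive_R0: "positive_op R0"
    and orth_projection_P: "\<And>j. j \<in> {1..m} \<Longrightarrow> orth_projection (P j)"
begin

lemma Rw_invariants:
  assumes "set w \<subseteq> {1..m}"
  shows "positive_op (Rw P R0 w) \<and> (\<forall>y. op_sqrt (Rw P R0 w) y \<in> closure (range (op_sqrt R0)))
    \<and> (\<forall>y. inner y (Rw P R0 w y) \<le> inner y (R0 y))"
  using assms
proof (induction w rule: rev_induct)
  case Nil
  then show ?case
    using positive_R0 by (auto intro!: closure_subset[THEN subsetD])
next
  case (snoc j w)
  then have j: "j \<in> {1..m}" and pos: "positive_op (Rw P R0 w)"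
    and H0: "\<And>y. op_sqrt (Rw P R0 w) y \<in> closure (range (op_sqrt R0))"
    and le: "\<And>y. inner y (Rw P R0 w y) \<le> inner y (R0 y)"
    by auto
  define S where "S = op_sqrt (Rw P R0 w)"
  have S: "positive_op S" "\<And>y. S (S y) = Rw P R0 w y"
    using op_sqrt_spec[OF pos] by (simp_all add: S_def)
  have R: "Rw P R0 (w @ [j]) = (\<lambda>y. S (S y - P j (S y)))"
    by (simp add: Rw_snoc S_def)
  have "positive_op (Rw P R0 (w @ [j]))"
    unfolding R using positive_op_sandwich[OF S(1) orth_projection_imp_positive_op[OF
          orth_projection_complement[OF orth_projection_P[OF j]]]] .
  moreover have "op_sqrt (Rw P R0 (w @ [j])) y \<in> closure (range (op_sqrt R0))" for y
  proof -
    have "range (Rw P R0 (w @ [j])) \<subseteq> closure (range (op_sqrt R0))"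
      using H0 by (auto simp: R S_def)
    then have "closure (range (Rw P R0 (w @ [j]))) \<subseteq> closure (range (op_sqrt R0))"
      by (metis closure_closure closure_mono)
    then show ?thesis
      using op_sqrt_spec(3)[OF \<open>positive_op (Rw P R0 (w @ [j]))\<close>] by blast
  qed
  moreover have "inner y (Rw P R0 (w @ [j]) y) \<le> inner y (R0 y)" for y
    using inner_sandwich_complement_le[OF S(1) orth_projection_P[OF j], of y] le[of y]
    by (simp add: R S(2))
  ultimately show ?case
    by blast
qed

lemma positive_op_Rw: "set w \<subseteq> {1..m} \<Longrightarrow> positive_op (Rw P R0 w)"
  using Rw_invariants by blast

lemma op_sqrt_Rw_in_closure: "set w \<subseteq> {1..m} \<Longrightarrow> op_sqrt (Rw P R0 w) y \<in> closure (range (op_sqrt R0))"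
  using Rw_invariants by blast

lemma inner_Rw_le: "set w \<subseteq> {1..m} \<Longrightarrow> inner y (Rw P R0 w y) \<le> inner y (R0 y)"
  using Rw_invariants by blast

lemma energy_nonneg: "set w \<subseteq> {1..m} \<Longrightarrow> 0 \<le> inner x (Rw P R0 w x)"
  using positive_opD(3)[OF positive_op_Rw] .

lemma inner_Dw_nonneg:
  assumes "set w \<subseteq> {1..m}" "j \<in> {1..m}"
  shows "0 \<le> inner x (Dw P R0 w j x)"
  using op_sqrt_spec(1)[OF positive_op_Rw[OF assms(1)]]
    positive_opD(3)[OF orth_projection_imp_positive_op[OF orth_projection_P[OF assms(2)]]]
  by (simp add: inner_Dw)

lemma energy_snoc:
  assumes "set w \<subseteq> {1..m}"
  shows "inner x (Rw P R0 (w @ [j]) x) = inner x (Rw P R0 w x) - inner x (Dw P R0 w j x)"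
proof -
  note S = op_sqrt_spec[OF positive_op_Rw[OF assms]]
  show ?thesis
    by (simp add: Rw_snoc inner_Dw[OF S(1)] positive_opD(2)[OF S(1), symmetric] inner_diff_right
        flip: S(2))
qed

lemma norm_Rw_sq_le:
  assumes "set w \<subseteq> {1..m}"
  shows "(norm (Rw P R0 w x))\<^sup>2 \<le> onorm R0 * inner x (Rw P R0 w x)"
proof (rule positive_op_norm_sq_le[OF positive_op_Rw[OF assms]])
  have R0: "bounded_linear R0"
    using positive_opD(1)[OF positive_R0] .
  show "0 \<le> onorm R0"
    by (rule onorm_pos_le[OF R0])
  show "inner z (Rw P R0 w z) \<le> onorm R0 * (norm z)\<^sup>2" for z
    using inner_Rw_le[OF assms, of z] inner_apply_le_onorm[OF R0, of z] by linarith
qed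

lemma pcond_nonneg:
  assumes "set w \<subseteq> {1..m}" "j \<in> {1..m}" "\<forall>j\<in>{1..m}. 0 \<le> q j"
  shows "0 \<le> pcond P R0 m q x w j"
  using assms inner_Dw_nonneg[OF assms(1,2)] by (simp add: pcond_def Let_def)

end

locale splitting_energy_tree = energy_tree +
  assumes splitting: "\<And>v. v \<in> closure (range (op_sqrt R0)) \<Longrightarrow> (\<Sum>j=1..m. P j v) = v"
begin

lemma sum_inner_Dw:
  assumes "set w \<subseteq> {1..m}"
  shows "(\<Sum>j=1..m. inner x (Dw P R0 w j x)) = inner x (Rw P R0 w x)"
proof -
  note S = op_sqrt_spec[OF positive_op_Rw[OF assms]]
  have "(\<Sum>j=1..m. inner x (Dw P R0 w j x)) = inner (op_sqrt (Rw P R0 w) x) (op_sqrt (Rw P R0 w) x)"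
    using splitting[OF op_sqrt_Rw_in_closure[OF assms]] by (simp add: inner_Dw[OF S(1)] flip: inner_sum_right)
  also have "\<dots> = inner x (Rw P R0 w x)"
    by (simp add: positive_opD(2)[OF S(1)] S(2))
  finally show ?thesis .
qed

lemma pcond_energy_contraction:
  assumes w: "set w \<subseteq> {1..m}"
  shows "(\<Sum>j=1..m. pcond P R0 m q x w j * inner x (Rw P R0 (w @ [j]) x)) \<le> (1 - 1 / m) * inner x (Rw P R0 w x)"
proof (cases "0 < inner x (Rw P R0 w x)")
  case True
  have "pcond P R0 m q x w j = inner x (Dw P R0 w j x) / inner x (Rw P R0 w x)" for j
    using True sum_inner_Dw[OF w] by (simp add: pcond_def)
  then show ?thesis
    using sum_mult_complement_le[OF _ sum_inner_Dw[OF w] True] by (simp add: energy_snoc[OF w])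
next
  case False
  then have zero: "inner x (Rw P R0 w x) = 0"
    using energy_nonneg[OF w, of x] by simp
  have "inner x (Rw P R0 (w @ [j]) x) = 0" if "j \<in> {1..m}" for j
  proof -
    have "0 \<le> inner x (Rw P R0 (w @ [j]) x)"
      using w that by (intro energy_nonneg) simp
    then show ?thesis
      using inner_Dw_nonneg[OF w that, of x] by (simp add: energy_snoc[OF w] zero)
  qed
  then show ?thesis
    by (simp add: zero)
qed

end

section \<open>Path measures\<close>

definition words :: "nat \<Rightarrow> nat \<Rightarrow> nat list set" where
  "words m n = {w. set w \<subseteq> {1..m} \<and> length w = n}"

lemma finite_words: "finite (words m n)"
  unfolding words_def by (rule finite_lists_length_eq) simp

lemma words_0: "words m 0 = {[]}"
  by (auto simp: words_def)

lemma words_Suc: "words m (Suc n) = (\<lambda>(w, j). w @ [j]) ` (words m n \<times> {1..m})"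
proof (intro set_eqI iffI)
  fix v
  assume "v \<in> words m (Suc n)"
  then have v: "set v \<subseteq> {1..m}" "length v = Suc n"
    by (auto simp: words_def)
  then obtain w j where "v = w @ [j]"
    by (metis length_Suc_conv_rev)
  then show "v \<in> (\<lambda>(w, j). w @ [j]) ` (words m n \<times> {1..m})"
    using v by (auto simp: words_def)
qed (auto simp: words_def)

lemma inj_on_snoc: "inj_on (\<lambda>(w, j). w @ [j]) A"
  by (auto simp: inj_on_def)

lemma space_Omega: "space (Omega m) = {\<omega>. \<forall>i. \<omega> i \<in> {1..m}}"
  by (auto simp: Omega_def space_PiM PiE_def Pi_def)

lemma length_prefix [simp]: "length (prefix \<omega> n) = n"
  by (simp add: prefix_def)

lemma prefix_Suc: "prefix \<omega> (Suc n) = prefix \<omega> n @ [\<omega> n]"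
  by (simp add: prefix_def)

lemma nth_prefix: "i < n \<Longrightarrow> prefix \<omega> n ! i = \<omega> i"
  by (simp add: prefix_def)

lemma prefix_in_words: "\<omega> \<in> space (Omega m) \<Longrightarrow> prefix \<omega> n \<in> words m n"
  by (auto simp: words_def prefix_def space_Omega)

lemma cyl_eq_prod_emb:
  "cyl m w = prod_emb UNIV (\<lambda>_. count_space {1..m}) {..<length w} (\<Pi>\<^sub>E i\<in>{..<length w}. {w ! i})"
proof (intro set_eqI iffI)
  fix \<omega>
  assume \<omega>: "\<omega> \<in> cyl m w"
  then have "\<omega> i = w ! i" if "i < length w" for i
    using nth_prefix[OF that, of \<omega>] by (simp add: cyl_def)
  with \<omega> show "\<omega> \<in> prod_emb UNIV (\<lambda>_. count_space {1..m}) {..<length w} (\<Pi>\<^sub>E i\<in>{..<length w}. {w ! i})"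
    by (simp add: cyl_def prod_emb_iff PiE_iff space_Omega)
next
  fix \<omega>
  assume \<omega>: "\<omega> \<in> prod_emb UNIV (\<lambda>_. count_space {1..m}) {..<length w} (\<Pi>\<^sub>E i\<in>{..<length w}. {w ! i})"
  then have "prefix \<omega> (length w) = w"
    by (intro nth_equalityI) (simp_all add: prod_emb_iff PiE_iff nth_prefix)
  with \<omega> show "\<omega> \<in> cyl m w"
    by (simp add: cyl_def prod_emb_iff space_Omega)
qed

lemma sets_cyl: "cyl m w \<in> sets (Omega m)"
proof (cases "set w \<subseteq> {1..m}")
  case True
  then have "\<forall>i\<in>{..<length w}. {w ! i} \<in> sets (count_space {1..m})"
    using nth_mem by fastforce
  then show ?thesis
    unfolding cyl_eq_prod_emb Omega_def by (intro sets_PiM_I) auto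
next
  case False
  have "w \<in> words m (length w)" if "\<omega> \<in> cyl m w" for \<omega>
    using that prefix_in_words[of \<omega> m "length w"] by (simp add: cyl_def)
  then have "cyl m w = {}"
    using False by (auto simp: words_def)
  then show ?thesis by simp
qed

lemma emeasure_prefix_in:
  assumes N: "sets N = sets (Omega m)" and G: "G \<subseteq> words m n"
  shows "emeasure N {\<omega> \<in> space (Omega m). prefix \<omega> n \<in> G} = (\<Sum>w\<in>G. emeasure N (cyl m w))"
proof -
  have "{\<omega> \<in> space (Omega m). prefix \<omega> n \<in> G} = (\<Union>w\<in>G. cyl m w)"
    using G by (auto simp: cyl_def words_def)
  moreover have "disjoint_family_on (cyl m) G"
    unfolding disjoint_family_on_def
  proof (intro ballI impI)
    fix v w
    assume "v \<in> G" "w \<in> G" "v \<noteq> w"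
    moreover from this have "length v = length w"
      using G by (auto simp: words_def)
    ultimately show "cyl m v \<inter> cyl m w = {}"
      by (auto simp: cyl_def)
  qed
  moreover have "(\<Sum>w\<in>G. emeasure N (cyl m w)) = emeasure N (\<Union>w\<in>G. cyl m w)"
    using N sets_cyl finite_subset[OF G finite_words] \<open>disjoint_family_on (cyl m) G\<close>
    by (intro sum_emeasure) auto
  ultimately show ?thesis
    by simp
qed

lemma path_measure_unique:
  assumes N1: "sets N1 = sets (Omega m)" "finite_measure N1" and N2: "sets N2 = sets (Omega m)"
    and cyl: "\<And>w. set w \<subseteq> {1..m} \<Longrightarrow> emeasure N1 (cyl m w) = emeasure N2 (cyl m w)"
  shows "N1 = N2"
proof (rule measure_eqI_PiM_infinite[where I=UNIV and M="\<lambda>_. count_space {1..m}"])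
  show "sets N1 = sets (Pi\<^sub>M UNIV (\<lambda>_. count_space {1..m}))" "sets N2 = sets (Pi\<^sub>M UNIV (\<lambda>_. count_space {1..m}))"
    using N1 N2 by (simp_all add: Omega_def)
  show "finite_measure N1" by fact
  fix A and J :: "nat set"
  assume "finite J"
  then obtain n where n: "J \<subseteq> {..<n}"
    using finite_nat_bounded by blast
  define G where "G = {w \<in> words m n. \<forall>j\<in>J. w ! j \<in> A j}"
  have Jn: "\<And>j. j \<in> J \<Longrightarrow> j < n"
    using n by auto
  have "\<omega> \<in> prod_emb UNIV (\<lambda>_. count_space {1..m}) J (Pi\<^sub>E J A) \<longleftrightarrow> \<omega> \<in> space (Omega m) \<and> prefix \<omega> n \<in> G"
    for \<omega>
  proof -
    have "\<omega> \<in> prod_emb UNIV (\<lambda>_. count_space {1..m}) J (Pi\<^sub>E J A) \<longleftrightarrow> \<omega> \<in> space (Omega m) \<and> (\<forall>j\<in>J. \<omega> j \<in> A j)"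
      by (auto simp: prod_emb_iff PiE_iff space_Omega)
    also have "\<dots> \<longleftrightarrow> \<omega> \<in> space (Omega m) \<and> prefix \<omega> n \<in> G"
      using Jn prefix_in_words[of \<omega> m n] by (auto simp: G_def nth_prefix)
    finally show ?thesis .
  qed
  then have "prod_emb UNIV (\<lambda>_. count_space {1..m}) J (Pi\<^sub>E J A) = {\<omega> \<in> space (Omega m). prefix \<omega> n \<in> G}"
    by blast
  moreover have "G \<subseteq> words m n"
    by (auto simp: G_def)
  ultimately show "emeasure N1 (prod_emb UNIV (\<lambda>_. count_space {1..m}) J (Pi\<^sub>E J A)) =
      emeasure N2 (prod_emb UNIV (\<lambda>_. count_space {1..m}) J (Pi\<^sub>E J A))"
    using emeasure_prefix_in[OF N1(1)] emeasure_prefix_in[OF N2] cyl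
    by (auto simp: words_def intro!: sum.cong)
qed

definition word_prob :: "(nat list \<Rightarrow> nat \<Rightarrow> real) \<Rightarrow> nat list \<Rightarrow> real" where
  "word_prob p w = (\<Prod>i<length w. p (take i w) (w ! i))"

lemma word_prob_snoc: "word_prob p (w @ [j]) = word_prob p w * p w j"
  unfolding word_prob_def by (auto simp: lessThan_Suc nth_append intro!: prod.cong)

lemma word_prob_nonneg:
  assumes "\<And>w j. set w \<subseteq> {1..m} \<Longrightarrow> j \<in> {1..m} \<Longrightarrow> 0 \<le> p w j" and "set w \<subseteq> {1..m}"
  shows "0 \<le> word_prob p w"
  unfolding word_prob_def
proof (rule prod_nonneg)
  fix i
  assume "i \<in> {..<length w}"
  then have "w ! i \<in> set w"
    by simp
  then have "w ! i \<in> {1..m}"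
    using assms(2) by blast
  moreover have "set (take i w) \<subseteq> {1..m}"
    by (rule order_trans[OF set_take_subset assms(2)])
  ultimately show "0 \<le> p (take i w) (w ! i)"
    by (rule assms(1)[rotated])
qed

lemma sum_word_prob_le:
  assumes nonneg: "\<And>w j. set w \<subseteq> {1..m} \<Longrightarrow> j \<in> {1..m} \<Longrightarrow> 0 \<le> p w j"
    and step: "\<And>w. set w \<subseteq> {1..m} \<Longrightarrow> (\<Sum>j=1..m. p w j * f (w @ [j])) \<le> r * f w"
    and r: "0 \<le> r"
  shows "(\<Sum>w\<in>words m n. word_prob p w * f w) \<le> r ^ n * f []"
proof (induction n)
  case 0
  then show ?case by (simp add: words_0 word_prob_def)
next
  case (Suc n)
  have "(\<Sum>w\<in>words m (Suc n). word_prob p w * f w)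
      = (\<Sum>(w, j)\<in>words m n \<times> {1..m}. word_prob p (w @ [j]) * f (w @ [j]))"
    unfolding words_Suc by (subst sum.reindex[OF inj_on_snoc]) (simp add: case_prod_beta)
  also have "\<dots> = (\<Sum>w\<in>words m n. \<Sum>j=1..m. word_prob p (w @ [j]) * f (w @ [j]))"
    by (rule sum.cartesian_product[symmetric])
  also have "\<dots> = (\<Sum>w\<in>words m n. word_prob p w * (\<Sum>j=1..m. p w j * f (w @ [j])))"
    by (simp add: word_prob_snoc sum_distrib_left mult.assoc)
  also have "\<dots> \<le> (\<Sum>w\<in>words m n. word_prob p w * (r * f w))"
  proof (rule sum_mono)
    fix w
    assume "w \<in> words m n"
    then have w: "set w \<subseteq> {1..m}"
      by (simp add: words_def)
    show "word_prob p w * (\<Sum>j=1..m. p w j * f (w @ [j])) \<le> word_prob p w * (r * f w)"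
      by (rule mult_left_mono[OF step[OF w] word_prob_nonneg[OF nonneg w]])
  qed
  also have "\<dots> = r * (\<Sum>w\<in>words m n. word_prob p w * f w)"
    by (simp add: sum_distrib_left mult.left_commute)
  also have "\<dots> \<le> r * (r ^ n * f [])"
    by (rule mult_left_mono[OF Suc r])
  finally show ?case by simp
qed

lemma integral_prefix:
  assumes N: "sets N = sets (Omega m)" "finite_measure N"
  shows "integrable N (\<lambda>\<omega>. f (prefix \<omega> n))"
    and "(\<integral>\<omega>. f (prefix \<omega> n) \<partial>N) = (\<Sum>w\<in>words m n. measure N (cyl m w) * f w)"
proof -
  interpret finite_measure N by (rule N(2))
  have space: "space N = space (Omega m)"
    using sets_eq_imp_space_eq[OF N(1)] .
  have sets: "cyl m w \<in> sets N" for w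
    using sets_cyl N(1) by simp
  have eq: "f (prefix \<omega> n) = (\<Sum>w\<in>words m n. indicator (cyl m w) \<omega> * f w)" if "\<omega> \<in> space N" for \<omega>
  proof -
    have "(\<Sum>w\<in>words m n. indicator (cyl m w) \<omega> * f w) = (\<Sum>w\<in>words m n. if prefix \<omega> n = w then f w else 0)"
      using that by (intro sum.cong) (auto simp: space cyl_def words_def)
    then show ?thesis
      using prefix_in_words[of \<omega> m n] that finite_words by (simp add: space)
  qed
  have int: "integrable N (\<lambda>\<omega>. indicator (cyl m w) \<omega> * f w)" for w
    by (intro integrable_mult_left integrable_real_indicator sets) (simp add: emeasure_eq_measure)
  have "integrable N (\<lambda>\<omega>. f (prefix \<omega> n)) \<longleftrightarrow>
      integrable N (\<lambda>\<omega>. \<Sum>w\<in>words m n. indicator (cyl m w) \<omega> * f w)"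
    by (rule Bochner_Integration.integrable_cong) (simp_all add: eq)
  then show "integrable N (\<lambda>\<omega>. f (prefix \<omega> n))"
    using Bochner_Integration.integrable_sum[OF int] by simp
  have "(\<integral>\<omega>. f (prefix \<omega> n) \<partial>N) = (\<integral>\<omega>. (\<Sum>w\<in>words m n. indicator (cyl m w) \<omega> * f w) \<partial>N)"
    by (rule Bochner_Integration.integral_cong[OF refl eq])
  also have "\<dots> = (\<Sum>w\<in>words m n. measure N (cyl m w) * f w)"
    using sets by (simp add: Bochner_Integration.integral_sum[OF int] inf.absorb_iff2 sets.sets_into_space)
  finally show "(\<integral>\<omega>. f (prefix \<omega> n) \<partial>N) = (\<Sum>w\<in>words m n. measure N (cyl m w) * f w)" .
qed

primrec driven_path :: "(nat list \<Rightarrow> nat) \<Rightarrow> nat \<Rightarrow> nat list" where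
  "driven_path Y 0 = []"
| "driven_path Y (Suc n) = driven_path Y n @ [Y (driven_path Y n)]"

lemma prefix_driven_path: "prefix (\<lambda>n. Y (driven_path Y n)) n = driven_path Y n"
  by (induction n) (simp_all add: prefix_Suc prefix_def)

lemma driven_path_eq_iff:
  "length w = n \<Longrightarrow> driven_path Y n = w \<longleftrightarrow> (\<forall>i<n. Y (take i w) = w ! i)"
proof (induction n arbitrary: w)
  case (Suc n)
  then obtain v a where w: "w = v @ [a]" and v: "length v = n"
    by (metis length_Suc_conv_rev)
  have "driven_path Y (Suc n) = w \<longleftrightarrow> driven_path Y n = v \<and> Y v = a"
    by (auto simp: w)
  also have "\<dots> \<longleftrightarrow> (\<forall>i<Suc n. Y (take i w) = w ! i)"
    using Suc.IH[OF v] v by (auto simp: w nth_append less_Suc_eq)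
  finally show ?case .
qed simp

lemma prob_space_point_measure:
  assumes "finite A" "\<And>j. j \<in> A \<Longrightarrow> 0 \<le> p j" "(\<Sum>j\<in>A. p j) = 1"
  shows "prob_space (point_measure A (\<lambda>j. ennreal (p j)))"
proof
  have "emeasure (point_measure A (\<lambda>j. ennreal (p j))) A = (\<Sum>j\<in>A. ennreal (p j))"
    using assms(1) by (simp add: emeasure_point_measure_finite)
  also have "\<dots> = 1"
    using assms(3) by (simp add: sum_ennreal assms(2))
  finally show "emeasure (point_measure A (\<lambda>j. ennreal (p j))) (space (point_measure A (\<lambda>j. ennreal (p j)))) = 1"
    by (simp add: space_point_measure)
qed

lemma measurable_driven_path:
  assumes coord: "\<And>v. (\<lambda>y. y v) \<in> M \<rightarrow>\<^sub>M count_space A"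
  shows "(\<lambda>y n. y (driven_path y n)) \<in> M \<rightarrow>\<^sub>M PiM UNIV (\<lambda>_. count_space A)"
proof -
  have "(\<lambda>y. driven_path y n) \<in> M \<rightarrow>\<^sub>M count_space UNIV" for n
  proof (induction n)
    case (Suc n)
    have "(\<lambda>y. (\<lambda>v y. v @ [y v]) (driven_path y n) y) \<in> M \<rightarrow>\<^sub>M count_space UNIV"
      by (rule measurable_compose_countable'[OF measurable_compose[OF coord] Suc]) simp_all
    then show ?case by simp
  qed simp
  then have "(\<lambda>y. y (driven_path y n)) \<in> M \<rightarrow>\<^sub>M count_space A" for n
    by (rule measurable_compose_countable'[OF coord]) simp
  then show ?thesis
    by (rule measurable_PiM_single') (use measurable_space[OF coord] in auto)
qed

text \<open>Instead of Ionescu-Tulcea: draw one independent letter \<open>y v\<close> with law \<open>p v\<close> for every word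
  \<open>v\<close> and follow \<open>\<omega> n = y (\<omega>|n)\<close>.\<close>
lemma path_measure_exists:
  fixes p :: "nat list \<Rightarrow> nat \<Rightarrow> real"
  assumes m: "1 \<le> m"
    and nonneg: "\<And>w j. set w \<subseteq> {1..m} \<Longrightarrow> j \<in> {1..m} \<Longrightarrow> 0 \<le> p w j"
    and sum1: "\<And>w. set w \<subseteq> {1..m} \<Longrightarrow> (\<Sum>j=1..m. p w j) = 1"
  obtains N where "sets N = sets (Omega m)" "prob_space N"
    "\<And>w. set w \<subseteq> {1..m} \<Longrightarrow> emeasure N (cyl m w) = ennreal (word_prob p w)"
proof -
  define p' where "p' v j = (if set v \<subseteq> {1..m} then p v j else if j = 1 then 1 else 0)" for v j
  have p'_nonneg: "0 \<le> p' v j" if "j \<in> {1..m}" for v j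
    using nonneg that by (auto simp: p'_def)
  have p'_sum: "(\<Sum>j=1..m. p' v j) = 1" for v
  proof (cases "set v \<subseteq> {1..m}")
    case False
    then have "(\<Sum>j=1..m. p' v j) = (\<Sum>j=1..m. if j = 1 then 1 else 0)"
      by (simp add: p'_def)
    then show ?thesis
      using m by simp
  qed (use sum1 in \<open>simp add: p'_def\<close>)
  define L where "L v = point_measure {1..m} (\<lambda>j. ennreal (p' v j))" for v
  have sets_L: "sets (L v) = sets (count_space {1..m})" for v
    by (simp add: L_def sets_point_measure_count_space)
  have emeasure_L: "emeasure (L v) {j} = ennreal (p' v j)" if "j \<in> {1..m}" for v j
    using that by (simp add: L_def emeasure_point_measure_finite)
  interpret L: product_prob_space L "UNIV :: nat list set"
    unfolding L_def by (intro product_prob_spaceI prob_space_point_measure p'_nonneg p'_sum) simp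
  define Y where "Y = PiM (UNIV :: nat list set) L"
  have space_Y: "y \<in> space Y \<longleftrightarrow> (\<forall>v. y v \<in> {1..m})" for y
    by (simp add: Y_def space_PiM L_def space_point_measure PiE_iff)
  have "(\<lambda>y. y v) \<in> Y \<rightarrow>\<^sub>M count_space {1..m}" for v
    using measurable_component_singleton[of v UNIV L] measurable_cong_sets[OF refl sets_L[of v], of Y]
    unfolding Y_def by simp
  then have path: "(\<lambda>y n. y (driven_path y n)) \<in> Y \<rightarrow>\<^sub>M Omega m"
    unfolding Omega_def by (rule measurable_driven_path)
  define N where "N = distr Y (Omega m) (\<lambda>y n. y (driven_path y n))"
  show ?thesis
  proof
    show "sets N = sets (Omega m)"
      by (simp add: N_def)
    show "prob_space N"
      unfolding N_def Y_def by (rule prob_space.prob_space_distr[OF L.prob_space_axioms path[unfolded Y_def]])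
    fix w
    assume w: "set w \<subseteq> {1..m}"
    define J where "J = (\<lambda>i. take i w) ` {..<length w}"
    define X where "X v = {w ! length v}" for v :: "nat list"
    have w_nth: "w ! i \<in> {1..m}" if "i < length w" for i
      using w that nth_mem by blast
    have take_w: "set (take i w) \<subseteq> {1..m}" for i
      by (rule order_trans[OF set_take_subset w])
    have inj: "inj_on (\<lambda>i. take i w) {..<length w}"
      by (rule inj_onI) (metis length_take min.absorb2 lessThan_iff less_imp_le)
    have "(\<lambda>y n. y (driven_path y n)) -` cyl m w \<inter> space Y = prod_emb UNIV L J (Pi\<^sub>E J X)"
    proof (intro set_eqI)
      fix y
      have "y \<in> (\<lambda>y n. y (driven_path y n)) -` cyl m w \<inter> space Y \<longleftrightarrow> y \<in> space Y \<and> driven_path y (length w) = w"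
        using measurable_space[OF path] by (auto simp: cyl_def prefix_driven_path)
      also have "\<dots> \<longleftrightarrow> y \<in> prod_emb UNIV L J (Pi\<^sub>E J X)"
        by (auto simp: driven_path_eq_iff prod_emb_iff space_Y[unfolded Y_def space_PiM] J_def X_def
            PiE_iff min_def space_PiM Y_def L_def space_point_measure)
      finally show "y \<in> (\<lambda>y n. y (driven_path y n)) -` cyl m w \<inter> space Y \<longleftrightarrow> y \<in> prod_emb UNIV L J (Pi\<^sub>E J X)" .
    qed
    then have "emeasure N (cyl m w) = emeasure Y (prod_emb UNIV L J (Pi\<^sub>E J X))"
      unfolding N_def by (simp add: emeasure_distr[OF path sets_cyl])
    also have "\<dots> = (\<Prod>v\<in>J. emeasure (L v) (X v))"
      unfolding Y_def
      by (rule L.emeasure_PiM_emb) (auto simp: J_def X_def sets_L min_def w_nth[simplified])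
    also have "\<dots> = (\<Prod>i<length w. emeasure (L (take i w)) {w ! i})"
      by (simp add: J_def prod.reindex[OF inj] X_def min_def)
    also have "\<dots> = (\<Prod>i<length w. ennreal (p (take i w) (w ! i)))"
    proof (rule prod.cong[OF refl])
      fix i
      assume "i \<in> {..<length w}"
      then show "emeasure (L (take i w)) {w ! i} = ennreal (p (take i w) (w ! i))"
        using emeasure_L[OF w_nth] take_w by (simp add: p'_def)
    qed
    also have "\<dots> = ennreal (word_prob p w)"
      unfolding word_prob_def by (rule prod_ennreal) (use nonneg[OF take_w w_nth] in simp)
    finally show "emeasure N (cyl m w) = ennreal (word_prob p w)" .
  qed
qed

section \<open>Decay of the energy along random paths\<close>

lemma (in prob_space) AE_ex_less_if_integral_tendsto_0:
  fixes f :: "nat \<Rightarrow> 'a \<Rightarrow> real"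
  assumes int: "\<And>n. integrable M (f n)"
    and nonneg: "\<And>n x. x \<in> space M \<Longrightarrow> 0 \<le> f n x"
    and lim: "(\<lambda>n. \<integral>x. f n x \<partial>M) \<longlonglongrightarrow> 0"
    and e: "0 < e"
  shows "AE x in M. \<exists>n. f n x < e"
proof -
  have [measurable]: "f n \<in> borel_measurable M" for n
    using int by auto
  define B where "B = {x \<in> space M. \<forall>n. e \<le> f n x}"
  have B: "B \<in> sets M"
    unfolding B_def by measurable
  have "measure M B \<le> (\<integral>x. f n x \<partial>M) / e" for n
  proof -
    have "measure M B \<le> measure M {x \<in> space M. e \<le> f n x}"
      by (rule finite_measure_mono) (auto simp: B_def)
    also have "\<dots> \<le> (\<integral>x. f n x \<partial>M) / e"
      using nonneg e by (intro integral_Markov_inequality_measure[OF int, of "space M"]) auto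
    finally show ?thesis .
  qed
  then have "measure M B \<le> 0"
    using tendsto_divide_zero[OF lim, of e] by (intro LIMSEQ_le_const) auto
  then have "B \<in> null_sets M"
    using B measure_nonneg[of M B] by (intro null_setsI) (simp_all add: emeasure_eq_measure)
  then show ?thesis
    by (rule AE_I') (auto simp: B_def not_less)
qed

lemma (in prob_space) AE_tendsto_0_if_antimono_integral_tendsto_0:
  fixes f :: "nat \<Rightarrow> 'a \<Rightarrow> real"
  assumes int: "\<And>n. integrable M (f n)"
    and nonneg: "\<And>n x. x \<in> space M \<Longrightarrow> 0 \<le> f n x"
    and antimono: "\<And>n x. x \<in> space M \<Longrightarrow> f (Suc n) x \<le> f n x"
    and lim: "(\<lambda>n. \<integral>x. f n x \<partial>M) \<longlonglongrightarrow> 0"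
  shows "AE x in M. (\<lambda>n. f n x) \<longlonglongrightarrow> 0"
proof -
  have "AE x in M. \<forall>k. \<exists>n. f n x < 1 / Suc k"
    unfolding AE_all_countable by (intro allI AE_ex_less_if_integral_tendsto_0[OF int nonneg lim]) auto
  then show ?thesis
  proof (rule AE_mp[OF _ AE_I2[OF impI]])
    fix x
    assume x: "x \<in> space M" and small: "\<forall>k. \<exists>n. f n x < 1 / Suc k"
    show "(\<lambda>n. f n x) \<longlonglongrightarrow> 0"
    proof (rule LIMSEQ_I)
      fix e :: real
      assume "0 < e"
      then obtain k :: nat where k: "1 / Suc k < e"
        using nat_approx_posE by blast
      obtain n0 where "f n0 x < 1 / Suc k"
        using small by blast
      moreover have "decseq (\<lambda>n. f n x)"
        using antimono[OF x] by (rule decseq_SucI)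
      ultimately have "\<forall>n\<ge>n0. f n x < e"
        using k by (metis decseqD le_less_trans less_trans)
      then show "\<exists>n0. \<forall>n\<ge>n0. norm (f n x - 0) < e"
        using nonneg[OF x] by auto
    qed
  qed
qed

lemma nu_spec:
  assumes m: "1 \<le> m"
    and nonneg: "\<And>w j. set w \<subseteq> {1..m} \<Longrightarrow> j \<in> {1..m} \<Longrightarrow> 0 \<le> pcond P R0 m q x w j"
    and sum1: "\<And>w. set w \<subseteq> {1..m} \<Longrightarrow> (\<Sum>j=1..m. pcond P R0 m q x w j) = 1"
  shows "sets (nu P R0 m q x) = sets (Omega m)" "prob_space (nu P R0 m q x)"
    "\<And>w. set w \<subseteq> {1..m} \<Longrightarrow> emeasure (nu P R0 m q x) (cyl m w) = ennreal (word_prob (pcond P R0 m q x) w)"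
proof -
  define path_measure where "path_measure N \<longleftrightarrow> sets N = sets (Omega m) \<and> prob_space N \<and>
    (\<forall>w. set w \<subseteq> {1..m} \<longrightarrow> emeasure N (cyl m w) = ennreal (word_prob (pcond P R0 m q x) w))" for N
  obtain N where N: "sets N = sets (Omega m)" "prob_space N"
    "\<And>w. set w \<subseteq> {1..m} \<Longrightarrow> emeasure N (cyl m w) = ennreal (word_prob (pcond P R0 m q x) w)"
    using path_measure_exists[of m "pcond P R0 m q x", OF m nonneg sum1] by blast
  then have "path_measure N"
    by (simp add: path_measure_def)
  moreover have "N' = N" if "path_measure N'" for N'
    using that N by (intro path_measure_unique[of N' m N]) (simp_all add: path_measure_def prob_space_def)
  ultimately have "path_measure (THE N. path_measure N)"
    by (rule theI)
  moreover have "nu P R0 m q x = (THE N. path_measure N)"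
    by (simp add: nu_def path_measure_def word_prob_def)
  ultimately show "sets (nu P R0 m q x) = sets (Omega m)" "prob_space (nu P R0 m q x)"
    "\<And>w. set w \<subseteq> {1..m} \<Longrightarrow> emeasure (nu P R0 m q x) (cyl m w) = ennreal (word_prob (pcond P R0 m q x) w)"
    by (simp_all add: path_measure_def)
qed

context energy_tree
begin

lemma Rinf_eq_0_if_energy_tendsto_0:
  assumes \<omega>: "\<omega> \<in> space (Omega m)" and lim: "(\<lambda>n. inner x (Rw P R0 (prefix \<omega> n) x)) \<longlonglongrightarrow> 0"
  shows "Rinf P R0 \<omega> x = 0"
proof -
  have "(\<lambda>n. Rw P R0 (prefix \<omega> n) x) \<longlonglongrightarrow> 0"
  proof (rule Lim_null_comparison)
    have "set (prefix \<omega> n) \<subseteq> {1..m}" for n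
      using prefix_in_words[OF \<omega>] by (simp add: words_def)
    then show "\<forall>\<^sub>F n in sequentially. norm (Rw P R0 (prefix \<omega> n) x) \<le> sqrt (onorm R0 * inner x (Rw P R0 (prefix \<omega> n) x))"
      using norm_Rw_sq_le by (intro always_eventually allI real_le_rsqrt) blast
    show "(\<lambda>n. sqrt (onorm R0 * inner x (Rw P R0 (prefix \<omega> n) x))) \<longlonglongrightarrow> 0"
      using tendsto_real_sqrt[OF tendsto_mult_right_zero[OF lim]] by simp
  qed
  then show ?thesis
    unfolding Rinf_def by (rule limI)
qed

end

locale energy_biased_walk = splitting_energy_tree P R0 m
  for P :: "nat \<Rightarrow> 'a::{real_inner,complete_space} \<Rightarrow> 'a" and R0 :: "'a \<Rightarrow> 'a" and m :: nat +
  fixes q :: "nat \<Rightarrow> real" and x :: 'a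
  assumes m_pos: "1 \<le> m"
    and q_nonneg: "\<And>j. j \<in> {1..m} \<Longrightarrow> 0 \<le> q j" and q_sum: "(\<Sum>j=1..m. q j) = 1"
begin

lemma kernel_nonneg: "set w \<subseteq> {1..m} \<Longrightarrow> j \<in> {1..m} \<Longrightarrow> 0 \<le> pcond P R0 m q x w j"
  using pcond_nonneg q_nonneg by blast

lemmas sets_nu = nu_spec(1)[OF m_pos kernel_nonneg sum_pcond[OF q_sum]]
  and prob_space_nu = nu_spec(2)[OF m_pos kernel_nonneg sum_pcond[OF q_sum]]
  and emeasure_nu_cyl = nu_spec(3)[OF m_pos kernel_nonneg sum_pcond[OF q_sum]]

lemma finite_measure_nu: "finite_measure (nu P R0 m q x)"
  using prob_space_nu by (simp add: prob_space_def)

lemma integrable_energy: "integrable (nu P R0 m q x) (\<lambda>\<omega>. inner x (Rw P R0 (prefix \<omega> n) x))"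
  by (rule integral_prefix(1)[OF sets_nu finite_measure_nu])

lemma expected_energy_le:
  "(\<integral>\<omega>. inner x (Rw P R0 (prefix \<omega> n) x) \<partial>nu P R0 m q x) \<le> (1 - 1 / real m) ^ n * inner x (R0 x)"
proof -
  have "measure (nu P R0 m q x) (cyl m w) = word_prob (pcond P R0 m q x) w" if "w \<in> words m n" for w
    using that emeasure_nu_cyl word_prob_nonneg[OF kernel_nonneg] by (simp add: words_def measure_def)
  moreover have "0 \<le> 1 - 1 / real m"
    using m_pos by simp
  ultimately show ?thesis
    using integral_prefix(2)[OF sets_nu finite_measure_nu, where f="\<lambda>w. inner x (Rw P R0 w x)" and n=n]
      sum_word_prob_le[OF kernel_nonneg pcond_energy_contraction, where n=n]
    by simp
qed

lemma energy_prefix_nonneg_antimono: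
  assumes "\<omega> \<in> space (Omega m)"
  shows "0 \<le> inner x (Rw P R0 (prefix \<omega> n) x)"
    and "inner x (Rw P R0 (prefix \<omega> (Suc n)) x) \<le> inner x (Rw P R0 (prefix \<omega> n) x)"
proof -
  have w: "set (prefix \<omega> n) \<subseteq> {1..m}" and j: "\<omega> n \<in> {1..m}"
    using prefix_in_words[OF assms, of n] assms by (simp_all add: words_def space_Omega)
  show "0 \<le> inner x (Rw P R0 (prefix \<omega> n) x)"
    by (rule energy_nonneg[OF w])
  show "inner x (Rw P R0 (prefix \<omega> (Suc n)) x) \<le> inner x (Rw P R0 (prefix \<omega> n) x)"
    using inner_Dw_nonneg[OF w j, of x] by (simp add: prefix_Suc energy_snoc[OF w])
qed

lemma AE_energy_tendsto_0: "AE \<omega> in nu P R0 m q x. (\<lambda>n. inner x (Rw P R0 (prefix \<omega> n) x)) \<longlonglongrightarrow> 0"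
proof -
  interpret prob_space "nu P R0 m q x"
    by (rule prob_space_nu)
  have space: "space (nu P R0 m q x) = space (Omega m)"
    using sets_eq_imp_space_eq[OF sets_nu] .
  have bound: "(\<lambda>n. (1 - 1 / real m) ^ n * inner x (R0 x)) \<longlonglongrightarrow> 0"
    using m_pos by (intro tendsto_mult_left_zero LIMSEQ_power_zero) auto
  have "0 \<le> (\<integral>\<omega>. inner x (Rw P R0 (prefix \<omega> n) x) \<partial>nu P R0 m q x)" for n
    by (rule Bochner_Integration.integral_nonneg) (simp add: space energy_prefix_nonneg_antimono)
  then have "(\<lambda>n. \<integral>\<omega>. inner x (Rw P R0 (prefix \<omega> n) x) \<partial>nu P R0 m q x) \<longlonglongrightarrow> 0"
    by (intro tendsto_sandwich[OF _ _ tendsto_const bound] always_eventually allI expected_energy_le)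
  then show ?thesis
    using integrable_energy energy_prefix_nonneg_antimono
    by (intro AE_tendsto_0_if_antimono_integral_tendsto_0) (simp_all add: space)
qed

lemma AE_Rinf_apply_eq_0: "AE \<omega> in nu P R0 m q x. Rinf P R0 \<omega> x = 0"
  using AE_energy_tendsto_0
proof (rule AE_mp, intro AE_I2 impI)
  fix \<omega>
  assume "\<omega> \<in> space (nu P R0 m q x)" "(\<lambda>n. inner x (Rw P R0 (prefix \<omega> n) x)) \<longlonglongrightarrow> 0"
  then show "Rinf P R0 \<omega> x = 0"
    using sets_eq_imp_space_eq[OF sets_nu] by (simp add: Rinf_eq_0_if_energy_tendsto_0)
qed

end

theorem corollary5p4:
  fixes J R0 :: "'a::{real_inner,complete_space} \<Rightarrow> 'a"
    and P :: "nat \<Rightarrow> 'a \<Rightarrow> 'a" and m :: nat and q :: "nat \<Rightarrow> real" and x :: 'a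
  assumes "cstruct J"
    and "m \<ge> 2"
    and "\<forall>j\<in>{1..m}. orth_proj J (P j)"
    and "pos_op J R0"
    and "\<forall>j\<in>{1..m}. q j \<ge> 0" and "(\<Sum>j=1..m. q j) = 1"
    and "\<forall>v\<in>closure (range (op_sqrt R0)). (\<Sum>j=1..m. P j v) = v"
    and "inner x (R0 x) > 0"
  shows "(\<forall>n. (\<integral>\<omega>. inner x (Rw P R0 (prefix \<omega> n) x) \<partial>nu P R0 m q x)
               \<le> (1 - 1 / real m) ^ n * inner x (R0 x))
       \<and> (AE \<omega> in nu P R0 m q x. inner x (Rinf P R0 \<omega> x) = 0)"
proof -
  interpret energy_biased_walk P R0 m q x
  proof unfold_locales
    show "positive_op R0"
      using assms(4) by (rule pos_op_imp_positive_op)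
    show "orth_projection (P j)" if "j \<in> {1..m}" for j
      using assms(3) that by (blast intro: orth_proj_imp_orth_projection)
    show "(\<Sum>j=1..m. P j v) = v" if "v \<in> closure (range (op_sqrt R0))" for v
      using assms(7) that by blast
    show "1 \<le> m" "(\<Sum>j=1..m. q j) = 1"
      using assms(2,6) by simp_all
    show "0 \<le> q j" if "j \<in> {1..m}" for j
      using assms(5) that by blast
  qed
  have "AE \<omega> in nu P R0 m q x. inner x (Rinf P R0 \<omega> x) = 0"
    using AE_Rinf_apply_eq_0 by (rule AE_mp) simp
  with expected_energy_le show ?thesis
    by blast
qed

end
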